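(* Let $R$ be an associative ring with unity and let $\mathbf{K}=(K,\leq_p)$ and $\mathbf{K}^\star=(K^\star,\leq_p)$ be AECs of left $R$-modules such that $\mathbf{K}^\star$ is closed below $\mathbf{K}$. Then $\mathbf{K}^\star$ admits intersections, and for every $N\in K^\star$ and $A\subseteq N$ we have $cl^N_{\mathbf{K}}(A)=cl^N_{\mathbf{K}^\star}(A)$.
   Context: $\leq_p$ is the pure submodule relation. An AEC $(K,\leq_p)$ admits intersections if for every $N\in K$ and $A\subseteq N$, the module $cl^N_{\mathbf{K}}(A)=\bigcap\{M\in K: M\leq_pN, A\subseteq M\}$ belongs to $K$ and is a pure submodule of $N$. $\mathbf{K}^\star$ is closed below $\mathbf{K}$ if $K^\star\subseteq K$, both $K$ and $K^\star$ are closed under pure submodules, and $\mathbf{K}$ admits intersections. *)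

theory Defs
  imports "HOL-Algebra.Module"
begin

text \<open>HOL-Algebra's locale module requires a commutative ring, so we define left modules
  directly. The fields mult/one of the module record are unused.\<close>

definition lmodule :: "('a, 'c) ring_scheme \<Rightarrow> ('a, 'm) module \<Rightarrow> bool" where
  "lmodule R M \<longleftrightarrow> ring R \<and> abelian_group M \<and>
     (\<forall>a\<in>carrier R. \<forall>x\<in>carrier M. a \<odot>\<^bsub>M\<^esub> x \<in> carrier M) \<and>
     (\<forall>a\<in>carrier R. \<forall>b\<in>carrier R. \<forall>x\<in>carrier M.
        (a \<oplus>\<^bsub>R\<^esub> b) \<odot>\<^bsub>M\<^esub> x = a \<odot>\<^bsub>M\<^esub> x \<oplus>\<^bsub>M\<^esub> b \<odot>\<^bsub>M\<^esub> x) \<and>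
     (\<forall>a\<in>carrier R. \<forall>x\<in>carrier M. \<forall>y\<in>carrier M.
        a \<odot>\<^bsub>M\<^esub> (x \<oplus>\<^bsub>M\<^esub> y) = a \<odot>\<^bsub>M\<^esub> x \<oplus>\<^bsub>M\<^esub> a \<odot>\<^bsub>M\<^esub> y) \<and>
     (\<forall>a\<in>carrier R. \<forall>b\<in>carrier R. \<forall>x\<in>carrier M.
        (a \<otimes>\<^bsub>R\<^esub> b) \<odot>\<^bsub>M\<^esub> x = a \<odot>\<^bsub>M\<^esub> (b \<odot>\<^bsub>M\<^esub> x)) \<and>
     (\<forall>x\<in>carrier M. \<one>\<^bsub>R\<^esub> \<odot>\<^bsub>M\<^esub> x = x)"

definition submod :: "('a, 'c) ring_scheme \<Rightarrow> ('a, 'm) module \<Rightarrow> ('a, 'm) module \<Rightarrow> bool" where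
  "submod R M N \<longleftrightarrow> lmodule R M \<and> lmodule R N \<and> carrier M \<subseteq> carrier N \<and>
     (\<forall>x\<in>carrier M. \<forall>y\<in>carrier M. x \<oplus>\<^bsub>M\<^esub> y = x \<oplus>\<^bsub>N\<^esub> y) \<and>
     (\<forall>a\<in>carrier R. \<forall>x\<in>carrier M. a \<odot>\<^bsub>M\<^esub> x = a \<odot>\<^bsub>N\<^esub> x)"

definition pure_sub :: "('a, 'c) ring_scheme \<Rightarrow> ('a, 'm) module \<Rightarrow> ('a, 'm) module \<Rightarrow> bool" where
  "pure_sub R M N \<longleftrightarrow> submod R M N \<and>
     (\<forall>(n::nat) (m::nat) (r::nat \<Rightarrow> nat \<Rightarrow> 'a) (a::nat \<Rightarrow> 'm).
        (\<forall>i<n. \<forall>j<m. r i j \<in> carrier R) \<and> (\<forall>i<n. a i \<in> carrier M) \<and>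
        (\<exists>x. (\<forall>j<m. x j \<in> carrier N) \<and>
             (\<forall>i<n. (\<Oplus>\<^bsub>N\<^esub> j\<in>{..<m}. r i j \<odot>\<^bsub>N\<^esub> x j) = a i))
        \<longrightarrow>
        (\<exists>x. (\<forall>j<m. x j \<in> carrier M) \<and>
             (\<forall>i<n. (\<Oplus>\<^bsub>N\<^esub> j\<in>{..<m}. r i j \<odot>\<^bsub>N\<^esub> x j) = a i)))"

definition mod_iso :: "('a, 'c) ring_scheme \<Rightarrow> ('a, 'm) module \<Rightarrow> ('a, 'm) module \<Rightarrow> ('m \<Rightarrow> 'm) \<Rightarrow> bool" where
  "mod_iso R M N f \<longleftrightarrow> lmodule R M \<and> lmodule R N \<and> bij_betw f (carrier M) (carrier N) \<and>
     (\<forall>x\<in>carrier M. \<forall>y\<in>carrier M. f (x \<oplus>\<^bsub>M\<^esub> y) = f x \<oplus>\<^bsub>N\<^esub> f y) \<and>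
     (\<forall>a\<in>carrier R. \<forall>x\<in>carrier M. f (a \<odot>\<^bsub>M\<^esub> x) = a \<odot>\<^bsub>N\<^esub> f x)"

text \<open>The axioms that are automatic for the pure-submodule relation
  (partial order, invariance of \<le>p under isomorphism) hold by construction of pure_sub
  and are not repeated; the axioms that constrain K are stated.\<close>

definition AEC :: "('a, 'c) ring_scheme \<Rightarrow> ('a, 'm) module set \<Rightarrow> bool" where
  "AEC R K \<longleftrightarrow>
     (\<forall>M\<in>K. lmodule R M) \<and>
     \<comment> \<open>closure under isomorphism\<close>
     (\<forall>M\<in>K. \<forall>N f. mod_iso R M N f \<longrightarrow> N \<in> K) \<and>
     \<comment> \<open>coherence\<close>
     (\<forall>M1\<in>K. \<forall>M2\<in>K. \<forall>M3\<in>K.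
        submod R M1 M2 \<and> pure_sub R M1 M3 \<and> pure_sub R M2 M3 \<longrightarrow> pure_sub R M1 M2) \<and>
     \<comment> \<open>Tarski-Vaught chain axioms\<close>
     (\<forall>C U. C \<noteq> {} \<and> C \<subseteq> K \<and>
        (\<forall>M1\<in>C. \<forall>M2\<in>C. pure_sub R M1 M2 \<or> pure_sub R M2 M1) \<and>
        lmodule R U \<and> carrier U = \<Union>(carrier ` C) \<and> (\<forall>M\<in>C. submod R M U) \<longrightarrow>
          U \<in> K \<and> (\<forall>M\<in>C. pure_sub R M U) \<and>
          (\<forall>N\<in>K. (\<forall>M\<in>C. pure_sub R M N) \<longrightarrow> pure_sub R U N)) \<and>
     \<comment> \<open>Loewenheim-Skolem axiom, with LS(K) \<ge> |R| + aleph_0\<close>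
     (\<exists>L :: ('a + nat + 'm) set. infinite L \<and> ordLeq3 (card_of (carrier R)) (card_of L) \<and>
        (\<forall>N\<in>K. \<forall>A\<subseteq>carrier N. \<exists>M\<in>K. pure_sub R M N \<and> A \<subseteq> carrier M \<and>
           ordLeq3 (card_of (carrier M)) (card_of (A <+> L))))"

definition cl :: "('a, 'c) ring_scheme \<Rightarrow> ('a, 'm) module set \<Rightarrow> ('a, 'm) module \<Rightarrow> 'm set \<Rightarrow> ('a, 'm) module" where
  "cl R K N A = N\<lparr>carrier := \<Inter>{carrier M | M. M \<in> K \<and> pure_sub R M N \<and> A \<subseteq> carrier M}\<rparr>"

definition admits_intersections :: "('a, 'c) ring_scheme \<Rightarrow> ('a, 'm) module set \<Rightarrow> bool" where
  "admits_intersections R K \<longleftrightarrow>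
     (\<forall>N\<in>K. \<forall>A. A \<subseteq> carrier N \<longrightarrow> cl R K N A \<in> K \<and> pure_sub R (cl R K N A) N)"

definition closed_pure :: "('a, 'c) ring_scheme \<Rightarrow> ('a, 'm) module set \<Rightarrow> bool" where
  "closed_pure R K \<longleftrightarrow> (\<forall>N\<in>K. \<forall>M. pure_sub R M N \<longrightarrow> M \<in> K)"

definition closed_below :: "('a, 'c) ring_scheme \<Rightarrow> ('a, 'm) module set \<Rightarrow> ('a, 'm) module set \<Rightarrow> bool" where
  "closed_below R Ks K \<longleftrightarrow> Ks \<subseteq> K \<and> closed_pure R K \<and> closed_pure R Ks \<and> admits_intersections R K"

end

theory Submission
  imports Defs
begin

text \<open>If \<open>K\<^sup>\<star> \<subseteq> K\<close> and \<open>K\<^sup>\<star>\<close> is closed under pure submodules, then for \<open>N \<in> K\<^sup>\<star>\<close> every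
  \<open>M \<in> K\<close> with \<open>M \<le>\<^sub>p N\<close> already lies in \<open>K\<^sup>\<star>\<close>, so both closures intersect the same family
  of modules.\<close>

lemma cl_eq_of_closed_pure_subset:
  assumes "Ks \<subseteq> K" and "closed_pure R Ks" and "N \<in> Ks"
  shows "cl R K N A = cl R Ks N A"
proof -
  have "{carrier M | M. M \<in> K \<and> pure_sub R M N \<and> A \<subseteq> carrier M}
      = {carrier M | M. M \<in> Ks \<and> pure_sub R M N \<and> A \<subseteq> carrier M}"
    using assms unfolding closed_pure_def by blast
  then show ?thesis
    unfolding cl_def by simp
qed

lemma admits_intersections_of_closed_pure_subset:
  assumes sub: "Ks \<subseteq> K" and closed: "closed_pure R Ks" and K: "admits_intersections R K"
  shows "admits_intersections R Ks"
  unfolding admits_intersections_def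
proof (intro ballI allI impI)
  fix N A
  assume N: "N \<in> Ks" and A: "A \<subseteq> carrier N"
  have "pure_sub R (cl R K N A) N"
    using K N A sub unfolding admits_intersections_def by blast
  then have "pure_sub R (cl R Ks N A) N"
    using cl_eq_of_closed_pure_subset[OF sub closed N] by simp
  moreover from this have "cl R Ks N A \<in> Ks"
    using closed N unfolding closed_pure_def by blast
  ultimately show "cl R Ks N A \<in> Ks \<and> pure_sub R (cl R Ks N A) N"
    by blast
qed

theorem proposition5p3:
  fixes R :: "('a, 'c) ring_scheme"
    and K Ks :: "('a, 'm) module set"
  assumes "ring R"
    and "AEC R K"
    and "AEC R Ks"
    and "closed_below R Ks K"
  shows "admits_intersections R Ks \<and>
         (\<forall>N\<in>Ks. \<forall>A. A \<subseteq> carrier N \<longrightarrow> cl R K N A = cl R Ks N A)"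
proof -
  have sub: "Ks \<subseteq> K" and closed: "closed_pure R Ks" and K: "admits_intersections R K"
    using assms(4) unfolding closed_below_def by auto
  show ?thesis
    using admits_intersections_of_closed_pure_subset[OF sub closed K]
      cl_eq_of_closed_pure_subset[OF sub closed] by blast
qed

end
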